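(* Let $d\in\mathbb{N}$. There exists a constant $\Gamma=\Gamma(d)>0$ such that the following holds. Let $n,m\in\mathbb{N}$ with $n\geq 2$ and $C,q\in\mathbb{R}$ with $$\frac{n}{2(\log n)^{q}}\leq m\leq\frac{2n}{(\log n)^{q}},\qquad C\geq 1+\frac{2^{d+7}}{\log n},$$ and with $q\geq 1$ if $\frac{C^{1/d}n}{m}\notin\mathbb{Z}$, and $q>0$ if $\frac{C^{1/d}n}{m}\in\mathbb{Z}$. Then a uniformly random set $S\in\binom{\{1,\ldots,\lfloor C^{1/d}n\rfloor\}^{d}}{n^{d}}$ satisfies $$\mathbb{P}\left[\exists T\in\mathcal{T}_{m}\text{ such that }|S\cap(C^{1/d}n\cdot T)|\leq\frac{(1-\frac{\Gamma}{\log n})n^{d}}{m^{d}}\right]\leq \Gamma n^{\Gamma}\,2^{-\frac{(\log n)^{qd-2}}{\Gamma}}$$ and $$\mathbb{P}\left[\exists T\in\mathcal{T}_{m}\text{ such that }|S\cap(C^{1/d}n\cdot T)|\geq\frac{(1+\frac{\Gamma}{\log n})n^{d}}{m^{d}}\right]\leq \Gamma n^{\Gamma}\,2^{-\frac{(\log n)^{qd-2}}{\Gamma}}.$$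
   Context: $\log$ denotes the logarithm to base $2$. For $k\in\mathbb{N}$, $\mathcal{T}_{k}=\left\{\prod_{i=1}^{d}\left(\frac{p_{i}}{k},\frac{p_{i}+1}{k}\right]\colon p_{1},\ldots,p_{d}\in\{0,1,\ldots,k-1\}\right\}$, and $\lambda\cdot T=\{\lambda x\colon x\in T\}$. $\binom{A}{k}$ denotes the set of $k$-element subsets of $A$, with the uniform probability measure. *)

theory Defs
  imports "HOL-Probability.Probability"
begin

text \<open>Points of R^d (resp. Z^d) are represented as lists of length d.\<close>

definition grid :: "nat \<Rightarrow> nat \<Rightarrow> nat list set" where
  "grid N d = {x. length x = d \<and> (\<forall>i<d. x ! i \<in> {1..N})}"

definition tiles :: "nat \<Rightarrow> nat \<Rightarrow> real list set set" where
  "tiles k d = {{y. length y = d \<and> (\<forall>i<d. real (p ! i) / real k < y ! i \<and>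
                     y ! i \<le> (real (p ! i) + 1) / real k)}
               | p. length p = d \<and> (\<forall>i<d. p ! i < k)}"

definition scale_set :: "real \<Rightarrow> real list set \<Rightarrow> real list set" where
  "scale_set l T = (map (\<lambda>t. l * t)) ` T"

definition uniform_subsets :: "'a set \<Rightarrow> nat \<Rightarrow> 'a set pmf" where
  "uniform_subsets A k = pmf_of_set {S. S \<subseteq> A \<and> card S = k}"

end

theory Submission
  imports Defs
begin

text \<open>
  Write \<open>L = C powr (1/d) * n\<close> and \<open>N = \<lfloor>L\<rfloor>\<close>. For a fixed tile \<open>T\<close>, the number of
  points of the uniformly random \<open>n^d\<close>-subset \<open>S\<close> of the grid \<open>{1..N}^d\<close> that lie in \<open>L \<cdot> T\<close>
  is hypergeometric. Its exponential moments are dominated by those of the binomial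
  distribution with the same mean, so it obeys the Chernoff bounds \<open>exp (- \<mu> \<delta>\<^sup>2 / 32)\<close>
  around \<open>\<mu> = n^d / m^d\<close> as soon as \<open>L \<cdot> T\<close> contains a fraction \<open>(1 \<plusminus> \<delta>/2) / m^d\<close> of the
  grid. This holds exactly when \<open>L / m\<close> is an integer, and with error \<open>8 d / log n \<le> \<delta> / 2\<close>
  when \<open>log n \<ge> 16 d\<close> and \<open>q \<ge> 1\<close>: then every side of \<open>L \<cdot> T\<close> contains \<open>L / m \<plusminus> 1\<close>
  grid points with \<open>L / m \<ge> log n / 2\<close>. A union bound over the \<open>m^d\<close> tiles with
  \<open>\<delta> = min (\<Gamma> / log n) 1\<close> finishes the proof; in the remaining case \<open>log n < 16 d\<close>
  the claimed bound exceeds 1.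
\<close>

section \<open>Tail bounds for uniformly random subsets\<close>

abbreviation subsets_of_card :: "'a set \<Rightarrow> nat \<Rightarrow> 'a set set" where
  "subsets_of_card G s \<equiv> {S. S \<subseteq> G \<and> card S = s}"

lemma sum_Pow_power_card:
  fixes x y :: real
  assumes "finite B"
  shows "(\<Sum>J\<in>Pow B. x ^ card J * y ^ (card B - card J)) = (x + y) ^ card B"
proof -
  have "(x + y) ^ card B = (\<Prod>i\<in>B. x + y)" by simp
  also have "\<dots> = (\<Sum>J\<in>Pow B. (\<Prod>i\<in>J. x) * (\<Prod>i\<in>B - J. y))"
    by (rule prod_add[OF assms])
  also have "\<dots> = (\<Sum>J\<in>Pow B. x ^ card J * y ^ (card B - card J))"
    by (rule sum.cong) (auto simp: card_Diff_subset finite_subset[OF _ assms])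
  finally show ?thesis by simp
qed

lemma card_subsets_of_card_disjoint:
  assumes "finite G" "J \<subseteq> G"
  shows "card {S \<in> subsets_of_card G s. J \<inter> S = {}} = (card G - card J) choose s"
proof -
  have "{S \<in> subsets_of_card G s. J \<inter> S = {}} = subsets_of_card (G - J) s" by auto
  moreover have "card (G - J) = card G - card J"
    using assms by (simp add: card_Diff_subset finite_subset)
  ultimately show ?thesis using n_subsets[of "G - J" s] assms by simp
qed

lemma card_subsets_of_card_supset:
  assumes "finite G" "J \<subseteq> G" "card J \<le> s"
  shows "card {S \<in> subsets_of_card G s. J \<subseteq> S} = (card G - card J) choose (s - card J)"
proof -
  have fin_J: "finite J" using assms finite_subset by blast
  have "bij_betw (\<lambda>B. B \<union> J) (subsets_of_card (G - J) (s - card J)) {S \<in> subsets_of_card G s. J \<subseteq> S}"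
  proof (rule bij_betw_byWitness[where f' = "\<lambda>S. S - J"])
    show "(\<lambda>B. B \<union> J) ` subsets_of_card (G - J) (s - card J) \<subseteq> {S \<in> subsets_of_card G s. J \<subseteq> S}"
    proof (rule image_subsetI)
      fix B assume "B \<in> subsets_of_card (G - J) (s - card J)"
      then have B: "B \<subseteq> G - J" "card B = s - card J" by auto
      then have "finite B" "B \<inter> J = {}" using assms(1) finite_subset by blast+
      then show "B \<union> J \<in> {S \<in> subsets_of_card G s. J \<subseteq> S}"
        using B assms fin_J by (auto simp: card_Un_disjoint)
    qed
    show "(\<lambda>S. S - J) ` {S \<in> subsets_of_card G s. J \<subseteq> S} \<subseteq> subsets_of_card (G - J) (s - card J)"
      using fin_J by (auto simp: card_Diff_subset)
  qed auto
  moreover have "card (G - J) = card G - card J"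
    using assms by (simp add: card_Diff_subset finite_subset)
  ultimately show ?thesis
    using n_subsets[of "G - J" "s - card J"] assms by (simp add: bij_betw_same_card[symmetric])
qed

lemma choose_diff_le_ratio_power:
  assumes "k \<le> s" "s \<le> M" "0 < M"
  shows "real ((M - k) choose (s - k)) \<le> (real s / real M) ^ k * real (M choose s)"
  using assms(1)
proof (induction k)
  case 0
  then show ?case by simp
next
  case (Suc k)
  have Mk: "real (M - k) > 0" using Suc assms by simp
  have "(s - k) * ((M - k) choose (s - k)) = (M - k) * ((M - Suc k) choose (s - Suc k))"
    using binomial_absorption[of "s - Suc k" "M - k"] Suc.prems by (simp add: Suc_diff_Suc)
  then have "real (s - k) * real ((M - k) choose (s - k)) = real (M - k) * real ((M - Suc k) choose (s - Suc k))"
    by (metis of_nat_mult)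
  then have "real ((M - Suc k) choose (s - Suc k)) = real (s - k) / real (M - k) * real ((M - k) choose (s - k))"
    using Mk by (simp add: field_simps)
  also have "\<dots> \<le> real s / real M * real ((M - k) choose (s - k))"
  proof (rule mult_right_mono)
    have "real k * real s \<le> real k * real M" using assms(2) by (intro mult_left_mono) simp_all
    then have "real (s - k) * real M \<le> real s * real (M - k)"
      using Suc assms by (simp add: of_nat_diff algebra_simps)
    then show "real (s - k) / real (M - k) \<le> real s / real M"
      using Mk assms by (simp add: field_simps)
  qed simp
  also have "\<dots> \<le> real s / real M * ((real s / real M) ^ k * real (M choose s))"
    using Suc by (intro mult_left_mono) simp_all
  finally show ?case by (simp only: power_Suc mult.assoc)
qed

lemma choose_diff_le_complement_ratio_power:
  assumes "s \<le> M" "0 < M" "k \<le> M"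
  shows "real ((M - k) choose s) \<le> ((real M - real s) / real M) ^ k * real (M choose s)"
  using assms(3)
proof (induction k)
  case 0
  then show ?case by simp
next
  case (Suc k)
  have ratio_nonneg: "(real M - real s) / real M \<ge> 0" using assms by simp
  show ?case
  proof (cases "s \<le> M - Suc k")
    case False
    have "0 \<le> ((real M - real s) / real M) ^ Suc k"
      using ratio_nonneg by (rule zero_le_power)
    then have "0 \<le> ((real M - real s) / real M) ^ Suc k * real (M choose s)"
      by (rule mult_nonneg_nonneg) simp
    moreover have "(M - Suc k) choose s = 0" using False by simp
    ultimately show ?thesis by (simp only: of_nat_0)
  next
    case True
    have Mk: "real (M - k) > 0" using Suc.prems by simp
    have "M - k - 1 = M - Suc k" by simp
    then have "(M - k - s) * ((M - k) choose s) = (M - k) * ((M - Suc k) choose s)"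
      using binomial_absorb_comp[of "M - k" s] by (simp only:)
    then have "real (M - k - s) * real ((M - k) choose s) = real (M - k) * real ((M - Suc k) choose s)"
      by (metis of_nat_mult)
    then have "real ((M - Suc k) choose s) = real (M - k - s) / real (M - k) * real ((M - k) choose s)"
      using Mk by (simp add: field_simps)
    also have "\<dots> \<le> (real M - real s) / real M * real ((M - k) choose s)"
    proof (rule mult_right_mono)
      have "k + s \<le> M" using True Suc.prems by linarith
      then have "real (M - k - s) = real M - real k - real s" "real (M - k) = real M - real k"
        by (simp_all add: of_nat_diff)
      then have "real (M - k - s) * real M = (real M - real s) * real (M - k) - real s * real k"
        by (simp add: algebra_simps)
      then have "real (M - k - s) * real M \<le> (real M - real s) * real (M - k)" by simp
      then show "real (M - k - s) / real (M - k) \<le> (real M - real s) / real M"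
        using Mk assms by (simp add: field_simps)
    qed simp
    also have "\<dots> \<le> (real M - real s) / real M * (((real M - real s) / real M) ^ k * real (M choose s))"
      using Suc ratio_nonneg by (intro mult_left_mono) simp_all
    finally show ?thesis by (simp only: power_Suc mult.assoc)
  qed
qed

text \<open>
  Expanding \<open>(1 + t) ^ card (S \<inter> A)\<close> as a sum of \<open>t ^ card J\<close> over \<open>J \<subseteq> S \<inter> A\<close>: a fixed \<open>J\<close>
  lies in \<open>S\<close> with probability at most \<open>(s / card G) ^ card J\<close>, so the hypergeometric
  moment generating function is dominated by the binomial one.
\<close>

lemma sum_one_plus_power_card_Int_le:
  fixes t :: real
  assumes G: "finite G" and A: "A \<subseteq> G" and s: "s \<le> card G" "0 < card G" and t: "0 \<le> t"
  shows "(\<Sum>S\<in>subsets_of_card G s. (1 + t) ^ card (S \<inter> A))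
           \<le> real (card G choose s) * (1 + t * real s / real (card G)) ^ card A"
proof -
  have fin_A: "finite A" using A G finite_subset by blast
  have "(\<Sum>S\<in>subsets_of_card G s. (1 + t) ^ card (S \<inter> A))
      = (\<Sum>S\<in>subsets_of_card G s. \<Sum>J\<in>{J. J \<in> Pow A \<and> J \<subseteq> S}. t ^ card J)"
  proof (rule sum.cong)
    fix S
    have "Pow (S \<inter> A) = {J. J \<in> Pow A \<and> J \<subseteq> S}" by auto
    then show "(1 + t) ^ card (S \<inter> A) = (\<Sum>J\<in>{J. J \<in> Pow A \<and> J \<subseteq> S}. t ^ card J)"
      using sum_Pow_power_card[of "S \<inter> A" t 1] fin_A by (simp add: add.commute)
  qed simp
  also have "\<dots> = (\<Sum>J\<in>Pow A. \<Sum>S\<in>{S \<in> subsets_of_card G s. J \<subseteq> S}. t ^ card J)"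
    by (rule sum.swap_restrict) (use G fin_A in simp_all)
  also have "\<dots> = (\<Sum>J\<in>Pow A. t ^ card J * real (card {S \<in> subsets_of_card G s. J \<subseteq> S}))"
    by (simp add: mult.commute)
  also have "\<dots> \<le> (\<Sum>J\<in>Pow A. t ^ card J * ((real s / real (card G)) ^ card J * real (card G choose s)))"
  proof (intro sum_mono mult_left_mono)
    fix J assume "J \<in> Pow A"
    then have J: "J \<subseteq> G" using A by auto
    show "real (card {S \<in> subsets_of_card G s. J \<subseteq> S})
        \<le> (real s / real (card G)) ^ card J * real (card G choose s)"
    proof (cases "card J \<le> s")
      case True
      then show ?thesis
        using card_subsets_of_card_supset[OF G J True] choose_diff_le_ratio_power[OF True s] by simp
    next
      case False
      then have "{S \<in> subsets_of_card G s. J \<subseteq> S} = {}"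
        using G by (auto dest: card_mono[OF finite_subset])
      then show ?thesis by (simp del: Collect_empty_eq)
    qed
  qed (use t in simp)
  also have "\<dots> = real (card G choose s)
      * (\<Sum>J\<in>Pow A. (t * (real s / real (card G))) ^ card J * 1 ^ (card A - card J))"
    unfolding sum_distrib_left by (intro sum.cong refl)
      (simp only: power_mult_distrib mult_ac power_one mult_1_right)
  also have "\<dots> = real (card G choose s) * (1 + t * real s / real (card G)) ^ card A"
    using sum_Pow_power_card[OF fin_A, of "t * (real s / real (card G))" 1] by (simp add: add.commute)
  finally show ?thesis .
qed

text \<open>
  Dually, \<open>(1 - t) ^ card (S \<inter> A)\<close> is the sum of \<open>t ^ card J * (1 - t) ^ (card A - card J)\<close>
  over \<open>J \<subseteq> A - S\<close>, and a fixed \<open>J\<close> avoids \<open>S\<close> with probability at most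
  \<open>(1 - s / card G) ^ card J\<close>.
\<close>

lemma sum_one_minus_power_card_Int_le:
  fixes t :: real
  assumes G: "finite G" and A: "A \<subseteq> G" and s: "s \<le> card G" "0 < card G" and t: "0 \<le> t" "t \<le> 1"
  shows "(\<Sum>S\<in>subsets_of_card G s. (1 - t) ^ card (S \<inter> A))
           \<le> real (card G choose s) * (1 - t * real s / real (card G)) ^ card A"
proof -
  have fin_A: "finite A" using A G finite_subset by blast
  define w :: "'a set \<Rightarrow> real" where "w J = t ^ card J * (1 - t) ^ (card A - card J)" for J
  have "(\<Sum>S\<in>subsets_of_card G s. (1 - t) ^ card (S \<inter> A))
      = (\<Sum>S\<in>subsets_of_card G s. \<Sum>J\<in>{J. J \<in> Pow A \<and> J \<inter> S = {}}. w J)"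
  proof (rule sum.cong)
    fix S
    have card_A: "card A = card (S \<inter> A) + card (A - S)"
      using fin_A by (metis Int_commute card_Int_Diff)
    have "(1 - t) ^ card (S \<inter> A) = (1 - t) ^ card (S \<inter> A) * (t + (1 - t)) ^ card (A - S)"
      by simp
    also have "\<dots> = (1 - t) ^ card (S \<inter> A) * (\<Sum>J\<in>Pow (A - S). t ^ card J * (1 - t) ^ (card (A - S) - card J))"
      using sum_Pow_power_card[of "A - S" t "1 - t"] fin_A by simp
    also have "\<dots> = (\<Sum>J\<in>Pow (A - S). w J)"
      unfolding sum_distrib_left
    proof (rule sum.cong)
      fix J assume "J \<in> Pow (A - S)"
      then have "card J \<le> card (A - S)" using fin_A by (simp add: card_mono)
      then have "card A - card J = card (S \<inter> A) + (card (A - S) - card J)" using card_A by simp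
      then show "(1 - t) ^ card (S \<inter> A) * (t ^ card J * (1 - t) ^ (card (A - S) - card J)) = w J"
        by (simp add: w_def power_add)
    qed simp
    also have "Pow (A - S) = {J. J \<in> Pow A \<and> J \<inter> S = {}}" by auto
    finally show "(1 - t) ^ card (S \<inter> A) = (\<Sum>J\<in>{J. J \<in> Pow A \<and> J \<inter> S = {}}. w J)" .
  qed simp
  also have "\<dots> = (\<Sum>J\<in>Pow A. \<Sum>S\<in>{S \<in> subsets_of_card G s. J \<inter> S = {}}. w J)"
    by (rule sum.swap_restrict) (use G fin_A in simp_all)
  also have "\<dots> = (\<Sum>J\<in>Pow A. w J * real (card {S \<in> subsets_of_card G s. J \<inter> S = {}}))"
    by (simp add: mult.commute)
  also have "\<dots> \<le> (\<Sum>J\<in>Pow A. w J * (((real (card G) - real s) / real (card G)) ^ card J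
        * real (card G choose s)))"
  proof (intro sum_mono mult_left_mono)
    fix J assume "J \<in> Pow A"
    then have J: "J \<subseteq> G" using A by auto
    then have "card J \<le> card G" using G by (simp add: card_mono)
    then show "real (card {S \<in> subsets_of_card G s. J \<inter> S = {}})
        \<le> ((real (card G) - real s) / real (card G)) ^ card J * real (card G choose s)"
      using card_subsets_of_card_disjoint[OF G J] choose_diff_le_complement_ratio_power[OF s] by simp
    show "0 \<le> w J" using t by (simp add: w_def)
  qed
  also have "\<dots> = real (card G choose s)
      * (\<Sum>J\<in>Pow A. (t * ((real (card G) - real s) / real (card G))) ^ card J
        * (1 - t) ^ (card A - card J))"
    unfolding sum_distrib_left w_def
    by (intro sum.cong refl) (simp only: power_mult_distrib mult_ac)
  also have "\<dots> = real (card G choose s) * (t * ((real (card G) - real s) / real (card G)) + (1 - t)) ^ card A"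
    using sum_Pow_power_card[OF fin_A] by simp
  also have "t * ((real (card G) - real s) / real (card G)) + (1 - t) = 1 - t * real s / real (card G)"
    using s by (simp add: field_simps)
  finally show ?thesis .
qed

lemma card_mult_le_sum:
  fixes f :: "'a \<Rightarrow> real"
  assumes "finite \<Omega>" "E \<subseteq> \<Omega>" "\<And>\<omega>. \<omega> \<in> E \<Longrightarrow> a \<le> f \<omega>" "\<And>\<omega>. \<omega> \<in> \<Omega> \<Longrightarrow> 0 \<le> f \<omega>"
  shows "real (card E) * a \<le> (\<Sum>\<omega>\<in>\<Omega>. f \<omega>)"
proof -
  have "real (card E) * a = (\<Sum>\<omega>\<in>E. a)" by simp
  also have "\<dots> \<le> (\<Sum>\<omega>\<in>E. f \<omega>)" using assms(3) by (rule sum_mono)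
  also have "\<dots> \<le> (\<Sum>\<omega>\<in>\<Omega>. f \<omega>)" using assms by (intro sum_mono2) auto
  finally show ?thesis .
qed

lemma prob_uniform_subsets:
  assumes "finite G" "s \<le> card G"
  shows "measure_pmf.prob (uniform_subsets G s) {S. P S}
           = real (card {S \<in> subsets_of_card G s. P S}) / real (card G choose s)"
proof -
  have "subsets_of_card G s \<noteq> {}" "finite (subsets_of_card G s)"
    using assms n_subsets[of G s] by (auto simp del: Collect_empty_eq)
  then show ?thesis
    unfolding uniform_subsets_def using assms n_subsets[of G s]
    by (simp add: measure_pmf_of_set Int_def conj_commute)
qed

lemma prob_uniform_subsets_mono:
  assumes "finite G" "s \<le> card G" "\<And>S. S \<subseteq> G \<Longrightarrow> P S \<Longrightarrow> Q S"
  shows "measure_pmf.prob (uniform_subsets G s) {S. P S} \<le> measure_pmf.prob (uniform_subsets G s) {S. Q S}"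
proof -
  have "card {S \<in> subsets_of_card G s. P S} \<le> card {S \<in> subsets_of_card G s. Q S}"
    using assms by (intro card_mono) auto
  then show ?thesis by (simp add: prob_uniform_subsets[OF assms(1,2)] divide_right_mono)
qed

lemma prob_Bex_le:
  assumes "finite I" "\<And>i. i \<in> I \<Longrightarrow> measure_pmf.prob p {x. Q i x} \<le> b"
  shows "measure_pmf.prob p {x. \<exists>i\<in>I. Q i x} \<le> real (card I) * b"
proof -
  have "{x. \<exists>i\<in>I. Q i x} = (\<Union>i\<in>I. {x. Q i x})" by auto
  then have "measure_pmf.prob p {x. \<exists>i\<in>I. Q i x} \<le> (\<Sum>i\<in>I. measure_pmf.prob p {x. Q i x})"
    using measure_pmf.finite_measure_subadditive_finite[OF assms(1)] by simp
  also have "\<dots> \<le> (\<Sum>i\<in>I. b)" using assms(2) by (rule sum_mono)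
  finally show ?thesis by simp
qed

lemma uniform_subsets_upper_tail:
  fixes \<mu> \<delta> \<epsilon> :: real
  assumes G: "finite G" and A: "A \<subseteq> G" and s: "s \<le> card G" "0 < card G"
    and \<mu>: "0 < \<mu>" and \<delta>: "0 < \<delta>" "\<delta> \<le> 1" and \<epsilon>: "\<epsilon> \<le> \<delta> / 2"
    and mean: "real s / real (card G) * real (card A) \<le> (1 + \<epsilon>) * \<mu>"
  shows "measure_pmf.prob (uniform_subsets G s) {S. (1 + \<delta>) * \<mu> \<le> real (card (S \<inter> A))}
           \<le> exp (- (\<mu> * \<delta>\<^sup>2 / 32))"
proof -
  define t where "t = \<delta> / 8"
  define x where "x = (1 + \<delta>) * \<mu>"
  define E where "E = {S \<in> subsets_of_card G s. x \<le> real (card (S \<inter> A))}"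
  have t: "0 \<le> t" "t \<le> 1" using \<delta> by (auto simp: t_def)
  have x: "0 \<le> x" using \<delta> \<mu> by (simp add: x_def)
  have binom_pos: "0 < real (card G choose s)" using s by simp
  have "real (card E) * exp (x * ln (1 + t)) \<le> (\<Sum>S\<in>subsets_of_card G s. (1 + t) ^ card (S \<inter> A))"
  proof (rule card_mult_le_sum)
    fix S assume "S \<in> E"
    then have "x * ln (1 + t) \<le> real (card (S \<inter> A)) * ln (1 + t)"
      using t by (intro mult_right_mono) (auto simp: E_def)
    then have "exp (x * ln (1 + t)) \<le> exp (real (card (S \<inter> A)) * ln (1 + t))" by simp
    also have "\<dots> = (1 + t) ^ card (S \<inter> A)" using t by (simp add: exp_of_nat_mult)
    finally show "exp (x * ln (1 + t)) \<le> (1 + t) ^ card (S \<inter> A)" .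
  qed (use G t in \<open>auto simp: E_def\<close>)
  also have "\<dots> \<le> real (card G choose s) * (1 + t * real s / real (card G)) ^ card A"
    by (rule sum_one_plus_power_card_Int_le[OF G A s t(1)])
  also have "\<dots> \<le> real (card G choose s) * exp (t * (real s / real (card G) * real (card A)))"
  proof -
    have "(1 + t * real s / real (card G)) ^ card A \<le> exp (t * real s / real (card G)) ^ card A"
      using t by (intro power_mono) (use exp_ge_add_one_self[of "t * real s / real (card G)"] in auto)
    then show ?thesis
      by (intro mult_left_mono) (simp_all add: exp_of_nat_mult[symmetric] mult_ac)
  qed
  finally have "real (card E) / real (card G choose s)
      \<le> exp (t * (real s / real (card G) * real (card A)) - x * ln (1 + t))"
    using binom_pos by (simp add: exp_diff field_simps)
  also have "\<dots> \<le> exp (- (\<mu> * \<delta>\<^sup>2 / 32))"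
  proof -
    have "t * (real s / real (card G) * real (card A)) - x * ln (1 + t)
        \<le> t * ((1 + \<epsilon>) * \<mu>) - x * (t - t\<^sup>2)"
      using mean ln_one_plus_pos_lower_bound[OF t] t x by (intro diff_mono mult_left_mono) auto
    also have "\<dots> = \<mu> * (\<delta> / 8) * (\<epsilon> - \<delta> + \<delta> / 8 + \<delta>\<^sup>2 / 8)"
      by (simp add: t_def x_def power2_eq_square field_simps)
    also have "\<dots> \<le> \<mu> * (\<delta> / 8) * (- \<delta> / 4)"
    proof (rule mult_left_mono)
      have "\<delta>\<^sup>2 \<le> \<delta>" using \<delta> by (simp add: power2_eq_square mult_le_cancel_left1)
      then show "\<epsilon> - \<delta> + \<delta> / 8 + \<delta>\<^sup>2 / 8 \<le> - \<delta> / 4" using \<epsilon> by linarith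
    qed (use \<mu> \<delta> in simp)
    finally show ?thesis by (simp add: power2_eq_square)
  qed
  finally show ?thesis
    using prob_uniform_subsets[OF G s(1)] by (simp add: E_def x_def)
qed

lemma uniform_subsets_lower_tail:
  fixes \<mu> \<delta> \<epsilon> :: real
  assumes G: "finite G" and A: "A \<subseteq> G" and s: "s \<le> card G" "0 < card G"
    and \<mu>: "0 < \<mu>" and \<delta>: "0 < \<delta>" "\<delta> \<le> 1" and \<epsilon>: "\<epsilon> \<le> \<delta> / 2"
    and mean: "(1 - \<epsilon>) * \<mu> \<le> real s / real (card G) * real (card A)"
  shows "measure_pmf.prob (uniform_subsets G s) {S. real (card (S \<inter> A)) \<le> (1 - \<delta>) * \<mu>}
           \<le> exp (- (\<mu> * \<delta>\<^sup>2 / 32))"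
proof -
  define t where "t = \<delta> / 8"
  define x where "x = (1 - \<delta>) * \<mu>"
  define E where "E = {S \<in> subsets_of_card G s. real (card (S \<inter> A)) \<le> x}"
  have t: "0 \<le> t" "t \<le> 1 / 2" using \<delta> by (auto simp: t_def)
  have x: "0 \<le> x" using \<delta> \<mu> by (simp add: x_def)
  have binom_pos: "0 < real (card G choose s)" using s by simp
  have "real (card E) * exp (x * ln (1 - t)) \<le> (\<Sum>S\<in>subsets_of_card G s. (1 - t) ^ card (S \<inter> A))"
  proof (rule card_mult_le_sum)
    fix S assume "S \<in> E"
    then have "x * ln (1 - t) \<le> real (card (S \<inter> A)) * ln (1 - t)"
      using t by (intro mult_right_mono_neg) (auto simp: E_def)
    then have "exp (x * ln (1 - t)) \<le> exp (real (card (S \<inter> A)) * ln (1 - t))" by simp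
    also have "\<dots> = (1 - t) ^ card (S \<inter> A)" using t by (simp add: exp_of_nat_mult)
    finally show "exp (x * ln (1 - t)) \<le> (1 - t) ^ card (S \<inter> A)" .
  qed (use G t in \<open>auto simp: E_def\<close>)
  also have "\<dots> \<le> real (card G choose s) * (1 - t * real s / real (card G)) ^ card A"
    by (rule sum_one_minus_power_card_Int_le[OF G A s]) (use t in auto)
  also have "\<dots> \<le> real (card G choose s) * exp (- (t * (real s / real (card G) * real (card A))))"
  proof -
    have "t * real s \<le> real (card G)"
      using t s mult_left_le_one_le[of "real s" t] by simp
    then have "t * real s / real (card G) \<le> 1"
      using s by simp
    then have "(1 - t * real s / real (card G)) ^ card A \<le> exp (- (t * real s / real (card G))) ^ card A"
      by (intro power_mono) (use exp_ge_add_one_self[of "- (t * real s / real (card G))"] in auto)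
    then show ?thesis
      by (intro mult_left_mono) (simp_all add: exp_of_nat_mult[symmetric] mult_ac)
  qed
  finally have "real (card E) / real (card G choose s)
      \<le> exp (- (t * (real s / real (card G) * real (card A))) - x * ln (1 - t))"
    using binom_pos by (simp add: exp_diff field_simps)
  also have "\<dots> \<le> exp (- (\<mu> * \<delta>\<^sup>2 / 32))"
  proof -
    have "- (t * (real s / real (card G) * real (card A))) - x * ln (1 - t)
        \<le> - (t * ((1 - \<epsilon>) * \<mu>)) - x * (- t - 2 * t\<^sup>2)"
      using mean ln_one_minus_pos_lower_bound[OF t] t x
      by (intro diff_mono le_imp_neg_le mult_left_mono) auto
    also have "\<dots> = \<mu> * (\<delta> / 8) * (\<epsilon> - \<delta> + \<delta> / 4 - \<delta>\<^sup>2 / 4)"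
      by (simp add: t_def x_def power2_eq_square field_simps)
    also have "\<dots> \<le> \<mu> * (\<delta> / 8) * (- \<delta> / 4)"
      using \<mu> \<delta> \<epsilon> zero_le_power2[of \<delta>] by (intro mult_left_mono) (linarith, simp)
    finally show ?thesis by (simp add: power2_eq_square)
  qed
  finally show ?thesis
    using prob_uniform_subsets[OF G s(1)] by (simp add: E_def x_def)
qed

section \<open>Grid points in scaled tiles\<close>

definition tile :: "nat \<Rightarrow> nat list \<Rightarrow> real list set" where
  "tile k p = {y. length y = length p \<and>
     (\<forall>i<length p. real (p ! i) / real k < y ! i \<and> y ! i \<le> (real (p ! i) + 1) / real k)}"

lemma tiles_eq_image: "tiles k d = tile k ` {p. length p = d \<and> (\<forall>i<d. p ! i < k)}"
  unfolding tiles_def tile_def by auto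

lemma finite_tiles: "finite (tiles k d)" and card_tiles_le: "card (tiles k d) \<le> k ^ d"
proof -
  have idx: "{p. length p = d \<and> (\<forall>i<d. p ! i < k)} = {p. set p \<subseteq> {..<k} \<and> length p = d}"
    by (auto simp: subset_code(1) all_set_conv_all_nth)
  show "finite (tiles k d)"
    unfolding tiles_eq_image idx by (simp add: finite_lists_length_eq)
  show "card (tiles k d) \<le> k ^ d"
    unfolding tiles_eq_image idx
    using card_image_le[OF finite_lists_length_eq[of "{..<k}" d], of "tile k"]
    by (simp add: card_lists_length_eq)
qed

lemma finite_grid: "finite (grid N d)" and card_grid: "card (grid N d) = N ^ d"
proof -
  have "grid N d = {x. set x \<subseteq> {1..N} \<and> length x = d}"
    unfolding grid_def by (auto simp: subset_code(1) all_set_conv_all_nth)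
  then show "finite (grid N d)" "card (grid N d) = N ^ d"
    by (simp_all add: finite_lists_length_eq card_lists_length_eq)
qed

lemma card_lists_nth_mem:
  assumes "\<And>i. finite (I i)"
  shows "card {x. length x = d \<and> (\<forall>i<d. x ! i \<in> I i)} = (\<Prod>i<d. card (I i))"
  using assms
proof (induction d arbitrary: I)
  case 0
  have "{x. length x = 0 \<and> (\<forall>i<0. x ! i \<in> I i)} = {[]}" by auto
  then show ?case by simp
next
  case (Suc d)
  have split: "{x. length x = Suc d \<and> (\<forall>i<Suc d. x ! i \<in> I i)}
     = (\<lambda>(h, t). h # t) ` (I 0 \<times> {x. length x = d \<and> (\<forall>i<d. x ! i \<in> I (Suc i))})"
  proof (rule set_eqI, rule iffI)
    fix x assume x: "x \<in> {x. length x = Suc d \<and> (\<forall>i<Suc d. x ! i \<in> I i)}"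
    then obtain h t where "x = h # t" by (cases x) auto
    then show "x \<in> (\<lambda>(h, t). h # t) ` (I 0 \<times> {x. length x = d \<and> (\<forall>i<d. x ! i \<in> I (Suc i))})"
      using x by (force simp: image_iff)
  qed (auto simp: less_Suc_eq_0_disj)
  have inj: "inj_on (\<lambda>(h, t). h # t) (I 0 \<times> {x. length x = d \<and> (\<forall>i<d. x ! i \<in> I (Suc i))})"
    by (rule inj_onI) auto
  have "card {x. length x = d \<and> (\<forall>i<d. x ! i \<in> I (Suc i))} = (\<Prod>i<d. card (I (Suc i)))"
    using Suc.IH[of "\<lambda>i. I (Suc i)"] Suc.prems by simp
  then show ?case
    unfolding split card_image[OF inj] card_cartesian_product prod.lessThan_Suc_shift by simp
qed

lemma card_nat_interval:
  fixes u v :: real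
  assumes "0 \<le> u" "u \<le> v"
  shows "real (card {k::nat. u < real k \<and> real k \<le> v}) = real_of_int \<lfloor>v\<rfloor> - real_of_int \<lfloor>u\<rfloor>"
proof -
  have "{k::nat. u < real k \<and> real k \<le> v} = {nat \<lfloor>u\<rfloor> + 1 .. nat \<lfloor>v\<rfloor>}"
  proof (rule set_eqI)
    fix k :: nat
    have "u < real k \<longleftrightarrow> \<lfloor>u\<rfloor> < int k" "real k \<le> v \<longleftrightarrow> int k \<le> \<lfloor>v\<rfloor>"
      by (simp_all add: floor_less_iff le_floor_iff)
    then show "k \<in> {k::nat. u < real k \<and> real k \<le> v} \<longleftrightarrow> k \<in> {nat \<lfloor>u\<rfloor> + 1 .. nat \<lfloor>v\<rfloor>}"
      using assms by auto
  qed
  moreover have "0 \<le> \<lfloor>u\<rfloor>" "0 \<le> \<lfloor>v\<rfloor>" "\<lfloor>u\<rfloor> \<le> \<lfloor>v\<rfloor>"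
    using assms by (simp_all add: floor_mono)
  ultimately show ?thesis by (simp add: of_nat_diff)
qed

lemma mem_scale_set_iff:
  assumes "L \<noteq> 0"
  shows "z \<in> scale_set L T \<longleftrightarrow> map (\<lambda>t. t / L) z \<in> T"
proof
  assume "z \<in> scale_set L T"
  then show "map (\<lambda>t. t / L) z \<in> T" using assms by (auto simp: scale_set_def comp_def)
next
  assume "map (\<lambda>t. t / L) z \<in> T"
  moreover have "z = map (\<lambda>t. L * t) (map (\<lambda>t. t / L) z)" using assms by (simp add: comp_def)
  ultimately show "z \<in> scale_set L T" unfolding scale_set_def by blast
qed

definition tile_points :: "real \<Rightarrow> nat \<Rightarrow> real list set \<Rightarrow> nat list set" where
  "tile_points L d T = {x \<in> grid (nat \<lfloor>L\<rfloor>) d. map real x \<in> scale_set L T}"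

lemma tile_points_tile_eq:
  fixes L :: real
  assumes L: "0 < L" and m: "0 < m" and p: "length p = d" "\<forall>i<d. p ! i < m"
  defines "u i \<equiv> L * real (p ! i) / real m"
  shows "tile_points L d (tile m p)
       = {x. length x = d \<and> (\<forall>i<d. x ! i \<in> {k. u i < real k \<and> real k \<le> u i + L / real m})}"
proof -
  have scaled: "a / real m < y / L \<longleftrightarrow> L * a / real m < y" "y / L \<le> a / real m \<longleftrightarrow> y \<le> L * a / real m"
    for a y :: real
    using L m by (simp_all add: field_simps)
  have shift: "L * (real (p ! i) + 1) / real m = u i + L / real m" for i
    by (simp add: u_def add_divide_distrib distrib_left)
  have in_range: "k \<in> {1..nat \<lfloor>L\<rfloor>}" if "i < d" "u i < real k" "real k \<le> u i + L / real m" for i k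
  proof -
    have "0 \<le> u i" using L by (simp add: u_def)
    then have "1 \<le> k" using that by simp
    have "p ! i + 1 \<le> m" using p that by (simp add: Suc_le_eq)
    then have "real (p ! i) + 1 \<le> real m" by linarith
    then have "L * (real (p ! i) + 1) \<le> L * real m" using L by (intro mult_left_mono) auto
    then have "u i + L / real m \<le> L" using m by (simp add: divide_le_eq flip: shift)
    then have "real k \<le> L" using that by simp
    with \<open>1 \<le> k\<close> show ?thesis by (simp add: le_nat_floor)
  qed
  show ?thesis
    using in_range by (auto simp: tile_points_def grid_def
        mem_scale_set_iff[OF L[THEN less_imp_neq, symmetric]]
        tile_def p scaled shift u_def[symmetric])
qed

lemma card_tile_points_bounds:
  fixes L :: real
  assumes L: "0 < L" and m: "0 < m" and T: "T \<in> tiles m d"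
  defines "A \<equiv> tile_points L d T"
  shows "real (card A) \<le> (L / real m + 1) ^ d"
    and "1 \<le> L / real m \<Longrightarrow> (L / real m - 1) ^ d \<le> real (card A)"
    and "L / real m \<in> \<int> \<Longrightarrow> real (card A) = (L / real m) ^ d"
proof -
  obtain p where p: "length p = d" "\<forall>i<d. p ! i < m" and T_eq: "T = tile m p"
    using T unfolding tiles_eq_image by blast
  define u where "u i = L * real (p ! i) / real m" for i
  define I where "I i = {k. u i < real k \<and> real k \<le> u i + L / real m}" for i
  have "finite (I i)" for i
  proof (rule finite_subset)
    show "I i \<subseteq> {..nat \<lfloor>u i + L / real m\<rfloor>}" by (auto simp: I_def le_nat_floor)
  qed simp
  moreover have "A = {x. length x = d \<and> (\<forall>i<d. x ! i \<in> I i)}"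
    unfolding A_def T_eq I_def u_def by (rule tile_points_tile_eq[OF L m p])
  ultimately have card_A: "real (card A) = (\<Prod>i<d. real (card (I i)))"
    by (simp add: card_lists_nth_mem)
  have card_I: "real (card (I i)) = real_of_int \<lfloor>u i + L / real m\<rfloor> - real_of_int \<lfloor>u i\<rfloor>" for i
    unfolding I_def using L m by (intro card_nat_interval) (simp_all add: u_def)
  have card_I_bounds: "L / real m - 1 \<le> real (card (I i))" "real (card (I i)) \<le> L / real m + 1" for i
    using card_I[of i] of_int_floor_le[of "u i"] real_of_int_floor_gt_diff_one[of "u i + L / real m"]
      of_int_floor_le[of "u i + L / real m"] real_of_int_floor_gt_diff_one[of "u i"]
    by linarith+
  show "real (card A) \<le> (L / real m + 1) ^ d"
    unfolding card_A using prod_mono[of "{..<d}" "\<lambda>i. real (card (I i))" "\<lambda>i. L / real m + 1"]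
      card_I_bounds
    by simp
  show "(L / real m - 1) ^ d \<le> real (card A)" if "1 \<le> L / real m"
    unfolding card_A using prod_mono[of "{..<d}" "\<lambda>i. L / real m - 1" "\<lambda>i. real (card (I i))"]
      card_I_bounds that
    by simp
  show "real (card A) = (L / real m) ^ d" if "L / real m \<in> \<int>"
  proof -
    obtain K where K: "L / real m = real_of_int K" using \<open>L / real m \<in> \<int>\<close> by (rule Ints_cases)
    have "real (card (I i)) = L / real m" for i
      unfolding card_I K using floor_add_int[of "u i" K] by simp
    then show ?thesis unfolding card_A by simp
  qed
qed

lemma one_plus_power_le:
  fixes f :: real
  assumes "0 \<le> f" "real d * f \<le> 1 / 2"
  shows "(1 + f) ^ d \<le> 1 + 2 * real d * f"
proof -
  have "(1 + f) ^ d \<le> exp f ^ d"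
    using assms(1) exp_ge_add_one_self[of f] by (intro power_mono) auto
  also have "\<dots> = exp (real d * f)" by (simp add: exp_of_nat_mult)
  also have "\<dots> \<le> 1 + 2 * (real d * f)"
    using exp_bound_lemma[of "real d * f"] assms by simp
  finally show ?thesis by simp
qed

lemma tile_points_density_bounds:
  fixes L \<Lambda> :: real
  assumes d: "16 * real d \<le> \<Lambda>" "1 \<le> d" and m: "0 < m" and "0 < L"
    and L: "real m / L \<le> 2 / \<Lambda>" "1 / L \<le> 1 / \<Lambda>" and T: "T \<in> tiles m d"
  shows "(1 - 8 * real d / \<Lambda>) / real m ^ d \<le> real (card (tile_points L d T)) / real (nat \<lfloor>L\<rfloor>) ^ d"
    and "real (card (tile_points L d T)) / real (nat \<lfloor>L\<rfloor>) ^ d \<le> (1 + 8 * real d / \<Lambda>) / real m ^ d"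
proof -
  define N where "N = real (nat \<lfloor>L\<rfloor>)"
  have \<Lambda>: "16 \<le> \<Lambda>" using d by linarith
  have L16: "16 \<le> L" using L(2) \<Lambda> \<open>0 < L\<close> by (simp add: field_simps)
  have N: "L - 1 \<le> N" "N \<le> L" using L16 by (simp_all add: N_def)
  have "2 / \<Lambda> \<le> 1 / 8" using \<Lambda> by simp
  then have mL: "real m / L \<le> 1 / 8" using L(1) by linarith
  then have Lm: "1 \<le> L / real m" using m L16 by (simp add: field_simps)
  have "(1 - 8 * real d / \<Lambda>) / real m ^ d \<le> (1 - real m / L) ^ d / real m ^ d"
  proof (rule divide_right_mono)
    have "real d * (real m / L) \<le> real d * (2 / \<Lambda>)" using L(1) by (intro mult_left_mono) auto
    then have "1 - 8 * real d / \<Lambda> \<le> 1 + real d * (- (real m / L))" using \<Lambda> by (simp add: field_simps)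
    also have "\<dots> \<le> (1 + (- (real m / L))) ^ d" using mL by (intro Bernoulli_inequality) linarith
    finally show "1 - 8 * real d / \<Lambda> \<le> (1 - real m / L) ^ d" by simp
  qed simp
  also have "\<dots> = (L / real m - 1) ^ d / L ^ d"
    using m L16 by (simp add: field_simps flip: power_divide)
  also have "\<dots> \<le> real (card (tile_points L d T)) / N ^ d"
    using card_tile_points_bounds(2)[OF _ m T Lm] N L16 by (intro frac_le power_mono) simp_all
  finally show "(1 - 8 * real d / \<Lambda>) / real m ^ d \<le> real (card (tile_points L d T)) / real (nat \<lfloor>L\<rfloor>) ^ d"
    by (simp add: N_def)
  have "real (card (tile_points L d T)) / N ^ d \<le> (L / real m + 1) ^ d / (L - 1) ^ d"
    using card_tile_points_bounds(1)[OF _ m T] N L16 by (intro frac_le power_mono) simp_all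
  also have "\<dots> = ((1 + real m / L) / (1 - 1 / L)) ^ d / real m ^ d"
  proof -
    have "(L / real m + 1) / (L - 1) = ((1 + real m / L) / (1 - 1 / L)) / real m"
      using m L16 by (simp add: field_simps)
    then show ?thesis by (simp only: power_divide[symmetric])
  qed
  also have "\<dots> \<le> (1 + 8 * real d / \<Lambda>) / real m ^ d"
  proof (rule divide_right_mono)
    have "(1 + real m / L) / (1 - 1 / L) \<le> (1 + 2 / \<Lambda>) / (1 - 1 / \<Lambda>)"
      using L \<Lambda> L16 by (intro frac_le) (simp_all add: field_simps)
    also have "\<dots> \<le> 1 + 4 / \<Lambda>"
      using \<Lambda> by (simp add: field_simps)
    finally have "((1 + real m / L) / (1 - 1 / L)) ^ d \<le> (1 + 4 / \<Lambda>) ^ d"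
      using m L16 by (intro power_mono) simp_all
    also have "\<dots> \<le> 1 + 2 * real d * (4 / \<Lambda>)"
      using d \<Lambda> by (intro one_plus_power_le) (simp_all add: field_simps)
    finally show "((1 + real m / L) / (1 - 1 / L)) ^ d \<le> 1 + 8 * real d / \<Lambda>" by simp
  qed simp
  finally show "real (card (tile_points L d T)) / real (nat \<lfloor>L\<rfloor>) ^ d \<le> (1 + 8 * real d / \<Lambda>) / real m ^ d"
    by (simp add: N_def)
qed

lemma tile_points_density_exact:
  fixes L :: real
  assumes L: "0 < L" and m: "0 < m" and T: "T \<in> tiles m d" and int: "L / real m \<in> \<int>"
  shows "real (card (tile_points L d T)) / real (nat \<lfloor>L\<rfloor>) ^ d = 1 / real m ^ d"
proof -
  have "L = L / real m * real m" using m by simp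
  also have "\<dots> \<in> \<int>" using int by (intro Ints_mult) auto
  finally obtain z where "L = real_of_int z" by (rule Ints_cases)
  then have N: "real (nat \<lfloor>L\<rfloor>) = L" using L by simp
  show ?thesis
    unfolding N using card_tile_points_bounds(3)[OF L m T int] L m by (simp add: power_divide)
qed

section \<open>Concentration in all tiles simultaneously\<close>

lemma prob_exists_deviating_tile:
  fixes L \<delta> \<epsilon> \<eta> :: real
  assumes n: "0 < n" "real n \<le> L" and m: "0 < m" and \<delta>: "0 < \<delta>" "\<delta> \<le> 1" "\<delta> \<le> \<eta>"
    and \<epsilon>: "\<epsilon> \<le> \<delta> / 2"
    and density: "\<And>T. T \<in> tiles m d \<Longrightarrow>
        (1 - \<epsilon>) / real m ^ d \<le> real (card (tile_points L d T)) / real (nat \<lfloor>L\<rfloor>) ^ d \<and>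
        real (card (tile_points L d T)) / real (nat \<lfloor>L\<rfloor>) ^ d \<le> (1 + \<epsilon>) / real m ^ d"
  defines "P \<equiv> uniform_subsets (grid (nat \<lfloor>L\<rfloor>) d) (n ^ d)" and "\<mu> \<equiv> real n ^ d / real m ^ d"
  shows "measure_pmf.prob P {S. \<exists>T\<in>tiles m d.
           real (card {x\<in>S. map real x \<in> scale_set L T}) \<le> (1 - \<eta>) * \<mu>} \<le> real m ^ d * exp (- (\<mu> * \<delta>\<^sup>2 / 32))"
    and "measure_pmf.prob P {S. \<exists>T\<in>tiles m d.
           (1 + \<eta>) * \<mu> \<le> real (card {x\<in>S. map real x \<in> scale_set L T})} \<le> real m ^ d * exp (- (\<mu> * \<delta>\<^sup>2 / 32))"
proof -
  define G where "G = grid (nat \<lfloor>L\<rfloor>) d"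
  have "n \<le> nat \<lfloor>L\<rfloor>" using n by (simp add: le_nat_floor)
  then have G: "finite G" "n ^ d \<le> card G" "0 < card G"
    using n by (simp_all add: G_def finite_grid card_grid power_mono)
  have \<mu>: "0 < \<mu>" using n m by (simp add: \<mu>_def)
  have points: "tile_points L d T \<subseteq> G" for T by (auto simp: tile_points_def G_def)
  have restrict: "{x\<in>S. map real x \<in> scale_set L T} = S \<inter> tile_points L d T" if "S \<subseteq> G" for S T
    using that by (auto simp: tile_points_def G_def)
  have mean: "(1 - \<epsilon>) * \<mu> \<le> real (n ^ d) / real (card G) * real (card (tile_points L d T)) \<and>
      real (n ^ d) / real (card G) * real (card (tile_points L d T)) \<le> (1 + \<epsilon>) * \<mu>"
    if "T \<in> tiles m d" for T
    using mult_left_mono[OF conjunct1[OF density[OF that]], of "real n ^ d"]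
      mult_left_mono[OF conjunct2[OF density[OF that]], of "real n ^ d"]
    by (simp add: G_def card_grid \<mu>_def mult.commute)
  have thresholds: "(1 - \<eta>) * \<mu> \<le> (1 - \<delta>) * \<mu>" "(1 + \<delta>) * \<mu> \<le> (1 + \<eta>) * \<mu>"
    using \<delta> \<mu> by (simp_all add: mult_right_mono)
  have union: "measure_pmf.prob P {S. \<exists>T\<in>tiles m d. Q T S} \<le> real m ^ d * exp (- (\<mu> * \<delta>\<^sup>2 / 32))"
    if "\<And>T. T \<in> tiles m d \<Longrightarrow> measure_pmf.prob P {S. Q T S} \<le> exp (- (\<mu> * \<delta>\<^sup>2 / 32))" for Q
  proof -
    have "measure_pmf.prob P {S. \<exists>T\<in>tiles m d. Q T S} \<le> real (card (tiles m d)) * exp (- (\<mu> * \<delta>\<^sup>2 / 32))"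
      using finite_tiles that by (rule prob_Bex_le)
    also have "\<dots> \<le> real m ^ d * exp (- (\<mu> * \<delta>\<^sup>2 / 32))"
      using card_tiles_le[of m d] by (intro mult_right_mono) (simp_all flip: of_nat_power)
    finally show ?thesis .
  qed
  show "measure_pmf.prob P {S. \<exists>T\<in>tiles m d.
      real (card {x\<in>S. map real x \<in> scale_set L T}) \<le> (1 - \<eta>) * \<mu>} \<le> real m ^ d * exp (- (\<mu> * \<delta>\<^sup>2 / 32))"
  proof (rule union)
    fix T assume T: "T \<in> tiles m d"
    have "measure_pmf.prob P {S. real (card {x\<in>S. map real x \<in> scale_set L T}) \<le> (1 - \<eta>) * \<mu>}
        \<le> measure_pmf.prob P {S. real (card (S \<inter> tile_points L d T)) \<le> (1 - \<delta>) * \<mu>}"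
      unfolding P_def G_def[symmetric]
      using thresholds by (intro prob_uniform_subsets_mono[OF G(1,2)]) (simp add: restrict)
    also have "\<dots> \<le> exp (- (\<mu> * \<delta>\<^sup>2 / 32))"
      unfolding P_def G_def[symmetric]
      by (rule uniform_subsets_lower_tail[OF G(1) points G(2,3) \<mu> \<delta>(1,2) \<epsilon> conjunct1[OF mean[OF T]]])
    finally show "measure_pmf.prob P {S. real (card {x\<in>S. map real x \<in> scale_set L T}) \<le> (1 - \<eta>) * \<mu>}
        \<le> exp (- (\<mu> * \<delta>\<^sup>2 / 32))" .
  qed
  show "measure_pmf.prob P {S. \<exists>T\<in>tiles m d.
      (1 + \<eta>) * \<mu> \<le> real (card {x\<in>S. map real x \<in> scale_set L T})} \<le> real m ^ d * exp (- (\<mu> * \<delta>\<^sup>2 / 32))"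
  proof (rule union)
    fix T assume T: "T \<in> tiles m d"
    have "measure_pmf.prob P {S. (1 + \<eta>) * \<mu> \<le> real (card {x\<in>S. map real x \<in> scale_set L T})}
        \<le> measure_pmf.prob P {S. (1 + \<delta>) * \<mu> \<le> real (card (S \<inter> tile_points L d T))}"
      unfolding P_def G_def[symmetric]
      using thresholds by (intro prob_uniform_subsets_mono[OF G(1,2)]) (simp add: restrict)
    also have "\<dots> \<le> exp (- (\<mu> * \<delta>\<^sup>2 / 32))"
      unfolding P_def G_def[symmetric]
      by (rule uniform_subsets_upper_tail[OF G(1) points G(2,3) \<mu> \<delta>(1,2) \<epsilon> conjunct2[OF mean[OF T]]])
    finally show "measure_pmf.prob P {S. (1 + \<eta>) * \<mu> \<le> real (card {x\<in>S. map real x \<in> scale_set L T})}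
        \<le> exp (- (\<mu> * \<delta>\<^sup>2 / 32))" .
  qed
qed

lemma chernoff_term_le:
  fixes q \<Gamma> \<delta> :: real
  assumes n: "2 \<le> n" and m: "0 < m" and q: "0 \<le> q"
    and m_le: "real m * log 2 (real n) powr q \<le> 2 * real n"
    and \<delta>: "1 / log 2 (real n) \<le> \<delta>"
    and \<Gamma>: "32 * 2 ^ d \<le> \<Gamma>" "real d \<le> \<Gamma>"
  shows "real m ^ d * exp (- (real n ^ d / real m ^ d * \<delta>\<^sup>2 / 32))
           \<le> \<Gamma> * real n powr \<Gamma> * 2 powr (- (log 2 (real n) powr (q * real d - 2) / \<Gamma>))"
proof -
  define \<Lambda> where "\<Lambda> = log 2 (real n)"
  define X where "X = \<Lambda> powr (q * real d - 2)"
  have \<Lambda>: "1 \<le> \<Lambda>" using n by (simp add: \<Lambda>_def)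
  have \<Lambda>q: "1 \<le> \<Lambda> powr q" using \<Lambda> q by (simp add: ge_one_powr_ge_zero)
  have X: "0 \<le> X" by (simp add: X_def)
  have "0 < 32 * (2::real) ^ d" by simp
  then have \<Gamma>_pos: "0 < \<Gamma>" using \<Gamma>(1) by linarith
  have "X / 2 ^ d = (\<Lambda> powr q / 2) ^ d * (1 / \<Lambda>)\<^sup>2"
    using \<Lambda> by (simp add: X_def powr_diff powr_powr[symmetric] powr_realpow power_divide mult.commute)
  also have "\<dots> \<le> (real n / real m) ^ d * \<delta>\<^sup>2"
  proof (intro mult_mono power_mono)
    show "\<Lambda> powr q / 2 \<le> real n / real m" using m_le m by (simp add: \<Lambda>_def field_simps)
    show "1 / \<Lambda> \<le> \<delta>" using \<delta> by (simp add: \<Lambda>_def)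
  qed (use \<Lambda> \<Lambda>q in simp_all)
  finally have X_le: "X / 2 ^ d \<le> real n ^ d / real m ^ d * \<delta>\<^sup>2" by (simp add: power_divide)
  have "real m \<le> real m * \<Lambda> powr q" using \<Lambda>q by (simp add: mult_le_cancel_left1)
  then have "real m ^ d \<le> (2 * real n) ^ d"
    using m_le by (intro power_mono) (simp_all add: \<Lambda>_def)
  also have "\<dots> = 2 ^ d * real n powr real d" using n by (simp add: power_mult_distrib powr_realpow)
  also have "\<dots> \<le> \<Gamma> * real n powr \<Gamma>"
    using \<Gamma> n by (intro mult_mono powr_mono) auto
  finally have m_pow: "real m ^ d \<le> \<Gamma> * real n powr \<Gamma>" .
  have "X / \<Gamma> \<le> X / (32 * 2 ^ d)" using \<Gamma> \<Gamma>_pos X by (intro divide_left_mono) auto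
  also have "\<dots> \<le> real n ^ d / real m ^ d * \<delta>\<^sup>2 / 32" using X_le by simp
  moreover have "X / \<Gamma> * ln 2 \<le> X / \<Gamma>"
    using ln_2_less_1 X \<Gamma>_pos by (intro mult_left_le) auto
  ultimately have "exp (- (real n ^ d / real m ^ d * \<delta>\<^sup>2 / 32)) \<le> exp (- (X / \<Gamma>) * ln 2)"
    by simp
  also have "\<dots> = 2 powr (- (X / \<Gamma>))" by (simp add: powr_def)
  finally show ?thesis
    using m_pow \<Gamma> by (simp add: X_def \<Lambda>_def mult_mono)
qed

lemma deviation_bound_ge_one:
  fixes q \<Gamma> :: real
  assumes n: "2 \<le> n" and m: "1 \<le> m" and q: "0 \<le> q"
    and m_le: "real m * log 2 (real n) powr q \<le> 2 * real n"
    and small: "log 2 (real n) \<le> 16 * real d"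
    and \<Gamma>: "2 ^ ((16 * d + 1) * d) \<le> \<Gamma>\<^sup>2" "1 \<le> \<Gamma>"
  shows "1 \<le> \<Gamma> * real n powr \<Gamma> * 2 powr (- (log 2 (real n) powr (q * real d - 2) / \<Gamma>))"
proof -
  define \<Lambda> where "\<Lambda> = log 2 (real n)"
  define X where "X = \<Lambda> powr (q * real d - 2)"
  have \<Lambda>: "1 \<le> \<Lambda>" using n by (simp add: \<Lambda>_def)
  have n_eq: "real n = 2 powr \<Lambda>" using n by (simp add: \<Lambda>_def)
  have "\<Lambda> powr q \<le> 2 * real n"
    using m_le m order_trans[OF mult_right_mono[of 1 "real m" "\<Lambda> powr q"]] by (simp add: \<Lambda>_def)
  have "X \<le> \<Lambda> powr (q * real d)" using \<Lambda> by (simp add: X_def powr_mono)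
  also have "\<dots> = (\<Lambda> powr q) ^ d" using \<Lambda> by (simp add: powr_powr[symmetric] powr_realpow)
  also have "\<dots> \<le> (2 * real n) ^ d" using \<open>\<Lambda> powr q \<le> 2 * real n\<close> by (intro power_mono) simp_all
  also have "\<dots> = 2 powr ((\<Lambda> + 1) * real d)"
    by (simp add: n_eq powr_add powr_powr[symmetric] powr_realpow)
  also have "\<dots> \<le> 2 powr real ((16 * d + 1) * d)"
  proof (rule powr_mono)
    have "(\<Lambda> + 1) * real d \<le> (16 * real d + 1) * real d"
      using small by (intro mult_right_mono) (simp_all add: \<Lambda>_def)
    then show "(\<Lambda> + 1) * real d \<le> real ((16 * d + 1) * d)" by (simp add: algebra_simps)
  qed simp
  also have "\<dots> = 2 ^ ((16 * d + 1) * d)" by (rule powr_realpow) simp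
  also have "\<dots> \<le> \<Gamma>\<^sup>2 * \<Lambda>"
    using \<Gamma>(1) \<Lambda> order_trans[OF _ mult_left_mono[of 1 \<Lambda> "\<Gamma>\<^sup>2"]] by simp
  finally have "X / \<Gamma> \<le> \<Gamma> * \<Lambda>"
    using \<Gamma>(2) by (simp add: divide_le_eq power2_eq_square mult_ac)
  then have "real n powr (- \<Gamma>) \<le> 2 powr (- (X / \<Gamma>))"
    by (simp add: n_eq powr_powr mult.commute)
  then have "real n powr \<Gamma> * real n powr (- \<Gamma>) \<le> real n powr \<Gamma> * 2 powr (- (X / \<Gamma>))"
    by (intro mult_left_mono) simp_all
  then have "1 \<le> real n powr \<Gamma> * 2 powr (- (X / \<Gamma>))"
    using n by (simp flip: powr_add)
  also have "\<dots> \<le> \<Gamma> * (real n powr \<Gamma> * 2 powr (- (X / \<Gamma>)))"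
    using mult_right_mono[OF \<Gamma>(2), of "real n powr \<Gamma> * 2 powr (- (X / \<Gamma>))"] by simp
  finally show ?thesis by (simp add: X_def \<Lambda>_def mult.assoc)
qed

lemma exists_tile_points_density_slack:
  fixes L q :: real
  assumes d: "1 \<le> d" and n: "2 \<le> n" and L: "real n \<le> L" and m: "0 < m"
    and m_le: "real m * log 2 (real n) powr q \<le> 2 * real n"
    and scale: "L / real m \<in> \<int> \<or> (1 \<le> q \<and> 16 * real d \<le> log 2 (real n))"
  shows "\<exists>\<epsilon>. \<epsilon> \<le> 8 * real d / log 2 (real n) \<and> \<epsilon> \<le> 1 / 2 \<and> (\<forall>T\<in>tiles m d.
           (1 - \<epsilon>) / real m ^ d \<le> real (card (tile_points L d T)) / real (nat \<lfloor>L\<rfloor>) ^ d \<and>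
           real (card (tile_points L d T)) / real (nat \<lfloor>L\<rfloor>) ^ d \<le> (1 + \<epsilon>) / real m ^ d)"
proof (cases "L / real m \<in> \<int>")
  case True
  then show ?thesis
    using tile_points_density_exact[OF _ m _ True] L n by (intro exI[of _ 0]) simp
next
  case False
  define \<Lambda> where "\<Lambda> = log 2 (real n)"
  have \<Lambda>: "1 \<le> \<Lambda>" using n by (simp add: \<Lambda>_def)
  have large: "16 * real d \<le> \<Lambda>" "1 \<le> q" using scale False by (simp_all add: \<Lambda>_def)
  have "\<Lambda> \<le> \<Lambda> powr q" using large(2) \<Lambda> powr_mono[of 1 q \<Lambda>] by simp
  have "real m / L \<le> real m / real n" using L n m by (intro divide_left_mono) auto
  also have "\<dots> \<le> 2 / \<Lambda> powr q" using m_le[folded \<Lambda>_def] n \<Lambda> by (auto simp: divide_simps mult.commute)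
  also have "\<dots> \<le> 2 / \<Lambda>" using \<open>\<Lambda> \<le> \<Lambda> powr q\<close> \<Lambda> by (intro divide_left_mono) auto
  finally have mL: "real m / L \<le> 2 / \<Lambda>" .
  have "real n < 2 ^ n" using less_exp[of n] by (metis of_nat_less_iff of_nat_numeral of_nat_power)
  then have "\<Lambda> < log 2 (2 ^ n)" unfolding \<Lambda>_def using n by (intro log_less) auto
  then have "\<Lambda> \<le> L" using L by (simp add: log_nat_power)
  then have "1 / L \<le> 1 / \<Lambda>" using \<Lambda> by (intro divide_left_mono) auto
  then show ?thesis
    using tile_points_density_bounds[OF large(1) d m _ mL] L n large(1) \<Lambda>
    by (intro exI[of _ "8 * real d / \<Lambda>"]) (simp add: \<Lambda>_def field_simps)
qed

lemma tile_deviation_bound: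
  fixes L q \<Gamma> :: real
  assumes d: "1 \<le> d" and n: "2 \<le> n" and L: "real n \<le> L"
    and m_lower: "real n / (2 * log 2 (real n) powr q) \<le> real m"
    and m_upper: "real m \<le> 2 * real n / log 2 (real n) powr q"
    and q: "L / real m \<notin> \<int> \<longrightarrow> 1 \<le> q" "L / real m \<in> \<int> \<longrightarrow> 0 < q"
    and \<Gamma>: "32 * 2 ^ d \<le> \<Gamma>" "16 * real d \<le> \<Gamma>" "2 ^ ((16 * d + 1) * d) \<le> \<Gamma>\<^sup>2"
  defines "P \<equiv> uniform_subsets (grid (nat \<lfloor>L\<rfloor>) d) (n ^ d)"
    and "B \<equiv> \<Gamma> * real n powr \<Gamma> * 2 powr (- (log 2 (real n) powr (q * real d - 2) / \<Gamma>))"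
  shows "measure_pmf.prob P {S. \<exists>T\<in>tiles m d. real (card {x\<in>S. map real x \<in> scale_set L T})
             \<le> (1 - \<Gamma> / log 2 (real n)) * real n ^ d / real m ^ d} \<le> B \<and>
         measure_pmf.prob P {S. \<exists>T\<in>tiles m d. real (card {x\<in>S. map real x \<in> scale_set L T})
             \<ge> (1 + \<Gamma> / log 2 (real n)) * real n ^ d / real m ^ d} \<le> B"
proof -
  define \<Lambda> where "\<Lambda> = log 2 (real n)"
  define \<delta> where "\<delta> = min (\<Gamma> / \<Lambda>) 1"
  have \<Lambda>: "1 \<le> \<Lambda>" using n by (simp add: \<Lambda>_def)
  have q0: "0 < q" using q by (cases "L / real m \<in> \<int>") auto
  have \<Lambda>q: "1 \<le> \<Lambda> powr q" using \<Lambda> q0 by (simp add: ge_one_powr_ge_zero)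
  have m_le: "real m * log 2 (real n) powr q \<le> 2 * real n"
    using m_upper pos_le_divide_eq[of "\<Lambda> powr q" "real m" "2 * real n"] \<Lambda>q
    unfolding \<Lambda>_def by linarith
  have "0 < real n / (2 * \<Lambda> powr q)" using n \<Lambda>q by (intro divide_pos_pos) auto
  then have m: "0 < m" using m_lower by (simp add: \<Lambda>_def)
  have \<delta>: "0 < \<delta>" "\<delta> \<le> 1" "\<delta> \<le> \<Gamma> / \<Lambda>" "1 / log 2 (real n) \<le> \<delta>"
    using \<Lambda> \<Gamma> d by (auto simp: \<delta>_def \<Lambda>_def divide_right_mono)
  show ?thesis
  proof (cases "L / real m \<in> \<int> \<or> (1 \<le> q \<and> 16 * real d \<le> \<Lambda>)")
    case True
    then obtain \<epsilon> where \<epsilon>: "\<epsilon> \<le> 8 * real d / \<Lambda>" "\<epsilon> \<le> 1 / 2" and density: "\<And>T. T \<in> tiles m d \<Longrightarrow>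
        (1 - \<epsilon>) / real m ^ d \<le> real (card (tile_points L d T)) / real (nat \<lfloor>L\<rfloor>) ^ d \<and>
        real (card (tile_points L d T)) / real (nat \<lfloor>L\<rfloor>) ^ d \<le> (1 + \<epsilon>) / real m ^ d"
      using exists_tile_points_density_slack[OF d n L m m_le] by (auto simp: \<Lambda>_def)
    have "\<epsilon> \<le> \<delta> / 2" using \<epsilon> \<Gamma>(2) \<Lambda> by (auto simp: \<delta>_def field_simps)
    note deviation = prob_exists_deviating_tile[OF _ L m \<delta>(1,2,3) this density, folded P_def]
    have "real m ^ d * exp (- (real n ^ d / real m ^ d * \<delta>\<^sup>2 / 32)) \<le> B"
      unfolding B_def using chernoff_term_le[OF n m _ m_le \<delta>(4)] \<Gamma> q0 by simp
    then show ?thesis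
      using deviation n by (simp add: \<Lambda>_def mult.commute[of _ "\<delta>\<^sup>2"])
  next
    case False
    then have "\<Lambda> \<le> 16 * real d" using q by auto
    then have "1 \<le> B"
      unfolding B_def using deviation_bound_ge_one[OF n _ _ m_le _ \<Gamma>(3)] m q0 \<Gamma>(2) d
      by (simp add: \<Lambda>_def)
    then show ?thesis using measure_pmf.prob_le_1 order_trans by blast
  qed
qed

lemma concentration_constant_bounds:
  assumes "1 \<le> d"
  defines "\<Gamma> \<equiv> (2::real) ^ (20 * d\<^sup>2)"
  shows "32 * 2 ^ d \<le> \<Gamma>" "16 * real d \<le> \<Gamma>" "2 ^ ((16 * d + 1) * d) \<le> \<Gamma>\<^sup>2"
proof -
  have "d \<le> d * d" by (rule le_square)
  then have exps: "d + 5 \<le> 20 * d\<^sup>2" "(16 * d + 1) * d \<le> 20 * d\<^sup>2 * 2"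
    using assms unfolding power2_eq_square by (linarith, simp add: algebra_simps)
  have "(2::real) ^ (d + 5) \<le> \<Gamma>" unfolding \<Gamma>_def using exps(1) by (rule power_increasing) simp
  then show "32 * 2 ^ d \<le> \<Gamma>" by (simp add: power_add)
  have "real d < 2 ^ d" using less_exp[of d] by (metis of_nat_less_iff of_nat_numeral of_nat_power)
  then show "16 * real d \<le> \<Gamma>" using \<open>32 * 2 ^ d \<le> \<Gamma>\<close> by linarith
  show "2 ^ ((16 * d + 1) * d) \<le> \<Gamma>\<^sup>2"
    unfolding \<Gamma>_def power_mult[symmetric] using exps(2) by (rule power_increasing) simp
qed

theorem lemma8:
  fixes d :: nat
  assumes "d \<ge> 1"
  shows "\<exists>\<Gamma>::real. \<Gamma> > 0 \<and>
    (\<forall>(n::nat) (m::nat) (C::real) (q::real).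
      n \<ge> 2 \<and>
      real n / (2 * (log 2 (real n)) powr q) \<le> real m \<and>
      real m \<le> 2 * real n / (log 2 (real n)) powr q \<and>
      C \<ge> 1 + 2 ^ (d + 7) / log 2 (real n) \<and>
      (C powr (1 / real d) * real n / real m \<notin> \<int> \<longrightarrow> q \<ge> 1) \<and>
      (C powr (1 / real d) * real n / real m \<in> \<int> \<longrightarrow> q > 0)
      \<longrightarrow>
      (let N = nat \<lfloor>C powr (1 / real d) * real n\<rfloor>;
           L = C powr (1 / real d) * real n;
           P = uniform_subsets (grid N d) (n ^ d);
           B = \<Gamma> * real n powr \<Gamma> * 2 powr (- ((log 2 (real n)) powr (q * real d - 2) / \<Gamma>))
       in measure_pmf.prob P {S. \<exists>T\<in>tiles m d.
              real (card {x\<in>S. map real x \<in> scale_set L T})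
                \<le> (1 - \<Gamma> / log 2 (real n)) * real n ^ d / real m ^ d} \<le> B \<and>
          measure_pmf.prob P {S. \<exists>T\<in>tiles m d.
              real (card {x\<in>S. map real x \<in> scale_set L T})
                \<ge> (1 + \<Gamma> / log 2 (real n)) * real n ^ d / real m ^ d} \<le> B))"
proof -
  define \<Gamma> :: real where "\<Gamma> = 2 ^ (20 * d\<^sup>2)"
  note \<Gamma> = concentration_constant_bounds[OF assms, folded \<Gamma>_def]
  \<comment> \<open>The lower bound on C is only used through C \<ge> 1.\<close>
  have L: "real n \<le> C powr (1 / real d) * real n" if "2 \<le> n" "1 + 2 ^ (d + 7) / log 2 (real n) \<le> C"
    for n :: nat and C :: real
  proof -
    have "0 \<le> 2 ^ (d + 7) / log 2 (real n)" using that(1) by simp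
    then have "1 \<le> C" using that(2) by linarith
    then show ?thesis by (simp add: ge_one_powr_ge_zero mult_le_cancel_right1)
  qed
  show ?thesis
    unfolding Let_def
  proof (intro exI[of _ \<Gamma>] conjI[of "0 < \<Gamma>"] allI impI, goal_cases)
    case 1
    then show ?case by (simp add: \<Gamma>_def)
  next
    case (2 n m C q)
    then show ?case
      using L[of n C] tile_deviation_bound[OF assms, where L = "C powr (1 / real d) * real n" and n = n] \<Gamma>
      by blast
  qed
qed

end
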